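(* Fix $\gamma\in\mathbb{R}$. Let $G$ be the directed graph whose vertices are the species $1,\dots,s_0$, with a directed edge from $i$ to $j$ whenever there is a reaction $k$ with $\zeta_{ik}<0$ and $\zeta_{jk}>0$, and let $G_1,\dots,G_p$ be its maximal strongly connected subgraphs (single vertices count as strongly connected). Let $\theta\in[0,\infty)^{s_0}$ and write $\theta=\sum_{j=1}^m\theta^j$ with $\theta^j\in[0,\infty)^{s_0}$, where $\mathrm{supp}(\theta^j)$ is contained in the vertex set of a maximal strongly connected subgraph $G_{i_j}$ and $G_{i_j}\ne G_{i_l}$ for $j\neq l$. Then: (i) if Condition 3.2 holds at $\gamma$ for each $\theta^j$, it holds at $\gamma$ for $\theta$; (ii) if the balance equation (B) holds for each $\theta^j$, then (B) holds for $\theta$; (iii) if the time-scale constraint (T) at $\gamma$ holds for each $\theta^j$, then (T) at $\gamma$ holds for $\theta$. Consequently, if Condition 3.2 (resp. (B), resp. (T) at $\gamma$) holds for every $\theta\in[0,\infty)^{s_0}$ whose support lies in the vertex set of some strongly connected subgraph of $G$, then it holds for every $\theta\in[0,\infty)^{s_0}$.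
   Context: Fix integers $s_0,r_0\ge 1$ and, for $k=1,\dots,r_0$, vectors $\nu_k,\nu_k'\in\mathbb{N}^{s_0}$ (reactant and product vectors of reaction $k$); set $\zeta_k=\nu_k'-\nu_k$. Fix $\alpha\in[0,\infty)^{s_0}$ and $\beta\in\mathbb{R}^{r_0}$ and set $\rho_k=\beta_k+\nu_k\cdot\alpha$. For $\theta\in[0,\infty)^{s_0}$ let $\Gamma_\theta^+=\{k:\theta\cdot\zeta_k>0\}$, $\Gamma_\theta^-=\{k:\theta\cdot\zeta_k<0\}$ and $\mathrm{supp}(\theta)=\{i:\theta_i>0\}$. A maximum over the empty set is $-\infty$. For $\theta\in[0,\infty)^{s_0}$ and $\gamma\in\mathbb{R}$: the balance equation for $\theta$ is (B) $\max_{k\in\Gamma_\theta^-}\rho_k=\max_{k\in\Gamma_\theta^+}\rho_k$; the time-scale constraint for $\theta$ at $\gamma$ is (T) $\gamma\le\max_{i:\theta_i>0}\alpha_i-\max_{k\in\Gamma_\theta^+\cup\Gamma_\theta^-}\rho_k$; Condition 3.2 holds for $\theta$ at $\gamma$ if (B) or (T) holds. *)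

theory Defs
  imports Complex_Main "HOL-Library.Extended_Real"
begin

text \<open>Species are indexed by 0..<s0, reactions by 0..<r0.
  nu k i / nu' k i are the i-th entries of the reactant/product vectors of reaction k.
  Vectors in R^s0 are functions nat => real of which only the entries i < s0 matter.\<close>

definition zeta :: "(nat \<Rightarrow> nat \<Rightarrow> nat) \<Rightarrow> (nat \<Rightarrow> nat \<Rightarrow> nat) \<Rightarrow> nat \<Rightarrow> nat \<Rightarrow> real" where
  "zeta nu nu' k i = real (nu' k i) - real (nu k i)"

definition rho :: "nat \<Rightarrow> (nat \<Rightarrow> nat \<Rightarrow> nat) \<Rightarrow> (nat \<Rightarrow> real) \<Rightarrow> (nat \<Rightarrow> real) \<Rightarrow> nat \<Rightarrow> real" where
  "rho s0 nu alpha beta k = beta k + (\<Sum>i<s0. real (nu k i) * alpha i)"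

definition dotz :: "nat \<Rightarrow> (nat \<Rightarrow> nat \<Rightarrow> nat) \<Rightarrow> (nat \<Rightarrow> nat \<Rightarrow> nat) \<Rightarrow> (nat \<Rightarrow> real) \<Rightarrow> nat \<Rightarrow> real" where
  "dotz s0 nu nu' theta k = (\<Sum>i<s0. theta i * zeta nu nu' k i)"

definition Gamma_plus :: "nat \<Rightarrow> nat \<Rightarrow> (nat \<Rightarrow> nat \<Rightarrow> nat) \<Rightarrow> (nat \<Rightarrow> nat \<Rightarrow> nat) \<Rightarrow> (nat \<Rightarrow> real) \<Rightarrow> nat set" where
  "Gamma_plus s0 r0 nu nu' theta = {k. k < r0 \<and> dotz s0 nu nu' theta k > 0}"

definition Gamma_minus :: "nat \<Rightarrow> nat \<Rightarrow> (nat \<Rightarrow> nat \<Rightarrow> nat) \<Rightarrow> (nat \<Rightarrow> nat \<Rightarrow> nat) \<Rightarrow> (nat \<Rightarrow> real) \<Rightarrow> nat set" where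
  "Gamma_minus s0 r0 nu nu' theta = {k. k < r0 \<and> dotz s0 nu nu' theta k < 0}"

definition supp :: "nat \<Rightarrow> (nat \<Rightarrow> real) \<Rightarrow> nat set" where
  "supp s0 theta = {i. i < s0 \<and> theta i > 0}"

definition nonneg_vec :: "nat \<Rightarrow> (nat \<Rightarrow> real) \<Rightarrow> bool" where
  "nonneg_vec s0 theta \<longleftrightarrow> (\<forall>i<s0. 0 \<le> theta i)"

text \<open>Maxima are taken in the extended reals; the maximum (supremum) over the empty set is -\<infinity>.\<close>

definition balance_eq ::
  "nat \<Rightarrow> nat \<Rightarrow> (nat \<Rightarrow> nat \<Rightarrow> nat) \<Rightarrow> (nat \<Rightarrow> nat \<Rightarrow> nat) \<Rightarrow> (nat \<Rightarrow> real) \<Rightarrow> (nat \<Rightarrow> real)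
    \<Rightarrow> (nat \<Rightarrow> real) \<Rightarrow> bool" where
  "balance_eq s0 r0 nu nu' alpha beta theta \<longleftrightarrow>
     (SUP k\<in>Gamma_minus s0 r0 nu nu' theta. ereal (rho s0 nu alpha beta k))
   = (SUP k\<in>Gamma_plus s0 r0 nu nu' theta. ereal (rho s0 nu alpha beta k))"

definition time_scale ::
  "nat \<Rightarrow> nat \<Rightarrow> (nat \<Rightarrow> nat \<Rightarrow> nat) \<Rightarrow> (nat \<Rightarrow> nat \<Rightarrow> nat) \<Rightarrow> (nat \<Rightarrow> real) \<Rightarrow> (nat \<Rightarrow> real)
    \<Rightarrow> real \<Rightarrow> (nat \<Rightarrow> real) \<Rightarrow> bool" where
  "time_scale s0 r0 nu nu' alpha beta gamma theta \<longleftrightarrow>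
     ereal gamma \<le> (SUP i\<in>supp s0 theta. ereal (alpha i))
       - (SUP k\<in>Gamma_plus s0 r0 nu nu' theta \<union> Gamma_minus s0 r0 nu nu' theta.
            ereal (rho s0 nu alpha beta k))"

definition cond32 ::
  "nat \<Rightarrow> nat \<Rightarrow> (nat \<Rightarrow> nat \<Rightarrow> nat) \<Rightarrow> (nat \<Rightarrow> nat \<Rightarrow> nat) \<Rightarrow> (nat \<Rightarrow> real) \<Rightarrow> (nat \<Rightarrow> real)
    \<Rightarrow> real \<Rightarrow> (nat \<Rightarrow> real) \<Rightarrow> bool" where
  "cond32 s0 r0 nu nu' alpha beta gamma theta \<longleftrightarrow>
     balance_eq s0 r0 nu nu' alpha beta theta \<or> time_scale s0 r0 nu nu' alpha beta gamma theta"

definition species_edge :: "nat \<Rightarrow> nat \<Rightarrow> (nat \<Rightarrow> nat \<Rightarrow> nat) \<Rightarrow> (nat \<Rightarrow> nat \<Rightarrow> nat) \<Rightarrow> nat \<Rightarrow> nat \<Rightarrow> bool" where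
  "species_edge s0 r0 nu nu' i j \<longleftrightarrow> i < s0 \<and> j < s0 \<and>
     (\<exists>k<r0. zeta nu nu' k i < 0 \<and> zeta nu nu' k j > 0)"

definition scc :: "nat \<Rightarrow> nat \<Rightarrow> (nat \<Rightarrow> nat \<Rightarrow> nat) \<Rightarrow> (nat \<Rightarrow> nat \<Rightarrow> nat) \<Rightarrow> nat \<Rightarrow> nat set" where
  "scc s0 r0 nu nu' i = {j. j < s0 \<and> (species_edge s0 r0 nu nu')\<^sup>*\<^sup>* i j \<and> (species_edge s0 r0 nu nu')\<^sup>*\<^sup>* j i}"

end

theory Submission
  imports Defs
begin

(* Write U for the reactions in some Gamma^+(theta^j) or Gamma^-(theta^j), M for the
   largest rate rho_k on U, and call a piece dominant if M is attained in its own
   Gamma^+ or Gamma^-.  Since theta.zeta_k = sum_j theta^j.zeta_k, Gamma^+(theta) and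
   Gamma^-(theta) lie inside U, so all maxima for theta are at most M.  A reaction
   lowering piece j and raising piece l yields an edge from the component of j to
   that of l; as the components are distinct, this reachability order on the pieces
   is acyclic.  For (B), take a dominant piece that is maximal (resp. minimal) in this
   order: its top reaction in Gamma^- (resp. Gamma^+) raises (resp. lowers) no other
   piece, hence lies in Gamma^-(theta) (resp. Gamma^+(theta)).  For (T), one dominant
   piece satisfying (T) suffices, since supports only grow.  Finally every
   nonnegative theta admits such a decomposition, which gives the global statements. *)

lemma finite_SUP_attained:
  fixes f :: "'a \<Rightarrow> 'b :: complete_linorder"
  assumes "finite A" "A \<noteq> {}"
  shows "\<exists>k\<in>A. (SUP k\<in>A. f k) = f k"
proof -
  have "Sup (f ` A) \<in> f ` A"
    using assms by (intro finite_Sup_in) (auto simp: sup_max max_def)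
  then show ?thesis by auto
qed

lemma finite_has_maximal_wrt:
  assumes "finite S" "S \<noteq> {}"
    and trans: "\<And>x y z. P x y \<Longrightarrow> P y z \<Longrightarrow> P x z" and irrefl: "\<And>x. \<not> P x x"
  shows "\<exists>x\<in>S. \<forall>y\<in>S. \<not> P x y"
  using assms(1,2)
proof (induction S rule: finite_ne_induct)
  case (singleton x)
  then show ?case using irrefl by auto
next
  case (insert x F)
  then obtain y where y: "y \<in> F" "\<forall>z\<in>F. \<not> P y z" by auto
  show ?case
  proof (cases "P y x")
    case True
    then have "\<forall>z\<in>insert x F. \<not> P x z" using y trans irrefl by blast
    then show ?thesis by blast
  next
    case False
    then show ?thesis using y by blast
  qed
qed

lemma dotz_sum:
  assumes "\<forall>i<s0. theta i = (\<Sum>j<m. thetas j i)"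
  shows "dotz s0 nu nu' theta k = (\<Sum>j<m. dotz s0 nu nu' (thetas j) k)"
proof -
  have "dotz s0 nu nu' theta k = (\<Sum>i<s0. \<Sum>j<m. thetas j i * zeta nu nu' k i)"
    unfolding dotz_def using assms by (intro sum.cong) (auto simp: sum_distrib_right)
  also have "\<dots> = (\<Sum>j<m. \<Sum>i<s0. thetas j i * zeta nu nu' k i)" by (rule sum.swap)
  finally show ?thesis by (simp add: dotz_def)
qed

lemma finite_Gamma:
  "finite (Gamma_plus s0 r0 nu nu' theta)" "finite (Gamma_minus s0 r0 nu nu' theta)"
  by (rule finite_subset[of _ "{..<r0}"]; auto simp: Gamma_plus_def Gamma_minus_def)+

text \<open>If no reaction changes theta.zeta_k, both (B) and (T) hold trivially, the
  relevant maxima being -\<infinity>.\<close>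

lemma balance_eq_no_reactions:
  assumes "Gamma_plus s0 r0 nu nu' theta \<union> Gamma_minus s0 r0 nu nu' theta = {}"
  shows "balance_eq s0 r0 nu nu' alpha beta theta"
  using assms by (simp add: balance_eq_def)

lemma time_scale_no_reactions:
  assumes "Gamma_plus s0 r0 nu nu' theta \<union> Gamma_minus s0 r0 nu nu' theta = {}"
  shows "time_scale s0 r0 nu nu' alpha beta gamma theta"
  using assms by (simp add: time_scale_def bot_ereal_def)

lemma scc_self: "i < s0 \<Longrightarrow> i \<in> scc s0 r0 nu nu' i"
  by (simp add: scc_def)

lemma scc_eq:
  assumes "i \<in> scc s0 r0 nu nu' a"
  shows "scc s0 r0 nu nu' a = scc s0 r0 nu nu' i"
  using assms unfolding scc_def by (blast intro: rtranclp_trans)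

section \<open>Decompositions along strongly connected components\<close>

text \<open>The hypotheses of Lemma 3.4: theta is the sum of the nonnegative pieces thetas j,
  j < m, the piece j being supported in the component of the species c j, with
  distinct pieces lying in distinct components.\<close>

locale scc_decomposition =
  fixes s0 r0 :: nat and nu nu' :: "nat \<Rightarrow> nat \<Rightarrow> nat"
    and theta :: "nat \<Rightarrow> real" and m :: nat and thetas :: "nat \<Rightarrow> nat \<Rightarrow> real"
    and c :: "nat \<Rightarrow> nat"
  assumes pieces_nonneg: "\<forall>j<m. nonneg_vec s0 (thetas j)"
    and pieces_sum: "\<forall>i<s0. theta i = (\<Sum>j<m. thetas j i)"
    and pieces_in_scc: "\<forall>j<m. c j < s0 \<and> supp s0 (thetas j) \<subseteq> scc s0 r0 nu nu' (c j)"
    and sccs_distinct: "\<forall>j<m. \<forall>l<m. j \<noteq> l \<longrightarrow> scc s0 r0 nu nu' (c j) \<noteq> scc s0 r0 nu nu' (c l)"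
begin

abbreviation "Gp \<equiv> Gamma_plus s0 r0 nu nu'"
abbreviation "Gm \<equiv> Gamma_minus s0 r0 nu nu'"
abbreviation "dz \<equiv> dotz s0 nu nu'"
abbreviation "reach \<equiv> (species_edge s0 r0 nu nu')\<^sup>*\<^sup>*"

definition active :: "nat set" where
  "active = (\<Union>j<m. Gp (thetas j) \<union> Gm (thetas j))"

lemma finite_active: "finite active"
  using finite_Gamma by (auto simp: active_def)

lemma Gamma_plus_subset: "Gp theta \<subseteq> (\<Union>j<m. Gp (thetas j))"
proof
  fix k assume "k \<in> Gp theta"
  then have k: "k < r0" "0 < (\<Sum>j<m. dz (thetas j) k)"
    using dotz_sum[OF pieces_sum] by (auto simp: Gamma_plus_def)
  then obtain j where "j < m" "dz (thetas j) k > 0"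
    by (meson lessThan_iff not_le sum_nonpos)
  then show "k \<in> (\<Union>j<m. Gp (thetas j))" using k by (auto simp: Gamma_plus_def)
qed

lemma Gamma_minus_subset: "Gm theta \<subseteq> (\<Union>j<m. Gm (thetas j))"
proof
  fix k assume "k \<in> Gm theta"
  then have k: "k < r0" "0 > (\<Sum>j<m. dz (thetas j) k)"
    using dotz_sum[OF pieces_sum] by (auto simp: Gamma_minus_def)
  then obtain j where "j < m" "dz (thetas j) k < 0"
    by (meson lessThan_iff not_le sum_nonneg)
  then show "k \<in> (\<Union>j<m. Gm (thetas j))" using k by (auto simp: Gamma_minus_def)
qed

lemma Gamma_subset_active: "Gp theta \<union> Gm theta \<subseteq> active"
  using Gamma_plus_subset Gamma_minus_subset by (auto simp: active_def)

text \<open>A reaction lowering piece j and raising piece l consumes a species of the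
  component of j and produces one of the component of l.\<close>

lemma opposite_signs_reach:
  assumes "j < m" "l < m" "k < r0" "dz (thetas j) k < 0" "dz (thetas l) k > 0"
  shows "reach (c j) (c l)"
proof -
  from assms(4) obtain i where i: "i < s0" "thetas j i * zeta nu nu' k i < 0"
    unfolding dotz_def by (meson lessThan_iff not_le sum_nonneg)
  from assms(5) obtain i' where i': "i' < s0" "thetas l i' * zeta nu nu' k i' > 0"
    unfolding dotz_def by (meson lessThan_iff not_le sum_nonpos)
  have "0 \<le> thetas j i" "0 \<le> thetas l i'"
    using pieces_nonneg assms(1,2) i i' by (auto simp: nonneg_vec_def)
  then have signs: "thetas j i > 0" "zeta nu nu' k i < 0" "thetas l i' > 0" "zeta nu nu' k i' > 0"
    using i(2) i'(2) by (auto simp: mult_less_0_iff zero_less_mult_iff)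
  have "i \<in> scc s0 r0 nu nu' (c j)" "i' \<in> scc s0 r0 nu nu' (c l)"
    using pieces_in_scc assms(1,2) i i' signs by (auto simp: supp_def)
  then have "reach (c j) i" "reach i' (c l)" by (simp_all add: scc_def)
  moreover have "species_edge s0 r0 nu nu' i i'"
    using i i' signs assms(3) by (auto simp: species_edge_def)
  ultimately show ?thesis by (meson rtranclp.rtrancl_into_rtrancl rtranclp_trans)
qed

text \<open>Reachability between distinct pieces is a strict order (the condensation of
  the species graph is acyclic).\<close>

definition precedes :: "nat \<Rightarrow> nat \<Rightarrow> bool" where
  "precedes j l \<longleftrightarrow> j < m \<and> l < m \<and> j \<noteq> l \<and> reach (c j) (c l)"

lemma reach_antisym:
  assumes "j < m" "l < m" "reach (c j) (c l)" "reach (c l) (c j)"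
  shows "j = l"
proof (rule ccontr)
  assume "j \<noteq> l"
  then have "scc s0 r0 nu nu' (c j) \<noteq> scc s0 r0 nu nu' (c l)"
    using sccs_distinct assms(1,2) by blast
  moreover have "c l \<in> scc s0 r0 nu nu' (c j)"
    using assms pieces_in_scc by (auto simp: scc_def)
  ultimately show False using scc_eq by metis
qed

lemma precedes_irrefl: "\<not> precedes j j"
  by (simp add: precedes_def)

lemma precedes_trans: "precedes x y \<Longrightarrow> precedes y z \<Longrightarrow> precedes x z"
  unfolding precedes_def using reach_antisym by (meson rtranclp_trans)

context
  fixes alpha beta :: "nat \<Rightarrow> real"
begin

abbreviation "rate k \<equiv> ereal (rho s0 nu alpha beta k)"

definition top_rate :: ereal where
  "top_rate = (SUP k\<in>active. rate k)"

definition dominant :: "nat set" where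
  "dominant = {j. j < m \<and> (\<exists>k\<in>Gp (thetas j) \<union> Gm (thetas j). rate k = top_rate)}"

lemma dominant_nonempty:
  assumes "active \<noteq> {}"
  shows "dominant \<noteq> {}"
proof -
  obtain k where "k \<in> active" "rate k = top_rate"
    using finite_SUP_attained[OF finite_active assms, of rate] by (auto simp: top_rate_def)
  then obtain j where "j < m" "k \<in> Gp (thetas j) \<union> Gm (thetas j)" "rate k = top_rate"
    by (auto simp: active_def)
  then have "j \<in> dominant" unfolding dominant_def by blast
  then show ?thesis by blast
qed

lemma SUP_active_le_top: "A \<subseteq> active \<Longrightarrow> (SUP k\<in>A. rate k) \<le> top_rate"
  unfolding top_rate_def by (rule SUP_subset_mono) auto

lemma dominant_balanced_attains:
  assumes "j \<in> dominant" "balance_eq s0 r0 nu nu' alpha beta (thetas j)"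
  shows "\<exists>k\<in>Gm (thetas j). rate k = top_rate" "\<exists>k\<in>Gp (thetas j). rate k = top_rate"
proof -
  let ?sp = "SUP k\<in>Gp (thetas j). rate k" and ?sm = "SUP k\<in>Gm (thetas j). rate k"
  obtain k0 where k0: "j < m" "k0 \<in> Gp (thetas j) \<union> Gm (thetas j)" "rate k0 = top_rate"
    using assms(1) by (auto simp: dominant_def)
  have eq: "?sp = ?sm" using assms(2) by (simp add: balance_eq_def)
  have "top_rate \<le> sup ?sp ?sm"
    using k0 SUP_upper[OF k0(2), of rate] by (simp add: SUP_union)
  moreover have "?sp \<le> top_rate" "?sm \<le> top_rate"
    using k0(1) by (intro SUP_active_le_top; auto simp: active_def)+
  ultimately have tops: "?sp = top_rate" "?sm = top_rate" using eq by (simp_all add: antisym)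
  have "top_rate \<noteq> bot" using k0(3) by (auto simp: bot_ereal_def)
  then have "Gp (thetas j) \<noteq> {}" "Gm (thetas j) \<noteq> {}" using tops by auto
  then obtain kp km where "kp \<in> Gp (thetas j)" "?sp = rate kp" "km \<in> Gm (thetas j)" "?sm = rate km"
    using finite_SUP_attained[OF finite_Gamma(1)] finite_SUP_attained[OF finite_Gamma(2)] by meson
  then show "\<exists>k\<in>Gm (thetas j). rate k = top_rate" "\<exists>k\<in>Gp (thetas j). rate k = top_rate"
    using tops by auto
qed

text \<open>A top reaction lowering a dominant piece that precedes no other dominant piece
  raises no piece at all, so it lowers theta.\<close>

lemma top_reaction_lowers_theta:
  assumes j: "j \<in> dominant" "\<forall>l\<in>dominant. \<not> precedes j l"
    and k: "k \<in> Gm (thetas j)" "rate k = top_rate"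
  shows "k \<in> Gm theta"
proof -
  have kj: "j < m" "k < r0" "dz (thetas j) k < 0"
    using j(1) k(1) by (auto simp: dominant_def Gamma_minus_def)
  have "dz (thetas l) k \<le> 0" if "l < m" for l
  proof (rule ccontr)
    assume "\<not> dz (thetas l) k \<le> 0"
    then have pos: "dz (thetas l) k > 0" by simp
    then have "l \<in> dominant" using kj k(2) that by (auto simp: dominant_def Gamma_plus_def)
    moreover have "precedes j l"
      using opposite_signs_reach[OF kj(1) that kj(2,3) pos] pos kj that by (auto simp: precedes_def)
    ultimately show False using j(2) by blast
  qed
  then have "0 < (\<Sum>l<m. - dz (thetas l) k)"
    using kj by (intro sum_pos2[of _ j]) auto
  then show ?thesis using kj dotz_sum[OF pieces_sum] by (auto simp: Gamma_minus_def sum_negf)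
qed

lemma top_reaction_raises_theta:
  assumes j: "j \<in> dominant" "\<forall>l\<in>dominant. \<not> precedes l j"
    and k: "k \<in> Gp (thetas j)" "rate k = top_rate"
  shows "k \<in> Gp theta"
proof -
  have kj: "j < m" "k < r0" "dz (thetas j) k > 0"
    using j(1) k(1) by (auto simp: dominant_def Gamma_plus_def)
  have "dz (thetas l) k \<ge> 0" if "l < m" for l
  proof (rule ccontr)
    assume "\<not> dz (thetas l) k \<ge> 0"
    then have neg: "dz (thetas l) k < 0" by simp
    then have "l \<in> dominant" using kj k(2) that by (auto simp: dominant_def Gamma_minus_def)
    moreover have "precedes l j"
      using opposite_signs_reach[OF that kj(1,2) neg kj(3)] neg kj that by (auto simp: precedes_def)
    ultimately show False using j(2) by blast
  qed
  then have "0 < (\<Sum>l<m. dz (thetas l) k)"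
    using kj by (intro sum_pos2[of _ j]) auto
  then show ?thesis using kj dotz_sum[OF pieces_sum] by (auto simp: Gamma_plus_def)
qed

lemma balance_eq_from_dominant:
  assumes "\<forall>j\<in>dominant. balance_eq s0 r0 nu nu' alpha beta (thetas j)"
  shows "balance_eq s0 r0 nu nu' alpha beta theta"
proof (cases "active = {}")
  case True
  then show ?thesis using Gamma_subset_active by (intro balance_eq_no_reactions) auto
next
  case False
  have fin: "finite dominant" by (rule finite_subset[of _ "{..<m}"]) (auto simp: dominant_def)
  obtain j1 where j1: "j1 \<in> dominant" "\<forall>l\<in>dominant. \<not> precedes j1 l"
    using finite_has_maximal_wrt[OF fin dominant_nonempty[OF False], of precedes]
      precedes_trans precedes_irrefl by blast
  obtain j2 where j2: "j2 \<in> dominant" "\<forall>l\<in>dominant. \<not> precedes l j2"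
    using finite_has_maximal_wrt[OF fin dominant_nonempty[OF False], of "\<lambda>x y. precedes y x"]
      precedes_trans precedes_irrefl by blast
  obtain k1 where "k1 \<in> Gm (thetas j1)" "rate k1 = top_rate"
    using dominant_balanced_attains(1) j1(1) assms by blast
  then have "k1 \<in> Gm theta" "rate k1 = top_rate" using top_reaction_lowers_theta j1 by auto
  then have "top_rate \<le> (SUP k\<in>Gm theta. rate k)" by (metis SUP_upper)
  moreover obtain k2 where "k2 \<in> Gp (thetas j2)" "rate k2 = top_rate"
    using dominant_balanced_attains(2) j2(1) assms by blast
  then have "k2 \<in> Gp theta" "rate k2 = top_rate" using top_reaction_raises_theta j2 by auto
  then have "top_rate \<le> (SUP k\<in>Gp theta. rate k)" by (metis SUP_upper)
  moreover have "(SUP k\<in>Gm theta. rate k) \<le> top_rate" "(SUP k\<in>Gp theta. rate k) \<le> top_rate"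
    using Gamma_subset_active by (intro SUP_active_le_top; auto)+
  ultimately show ?thesis by (simp add: balance_eq_def)
qed

lemma supp_piece_subset: "j < m \<Longrightarrow> supp s0 (thetas j) \<subseteq> supp s0 theta"
proof
  fix i assume j: "j < m" and "i \<in> supp s0 (thetas j)"
  then have i: "i < s0" "thetas j i > 0" by (auto simp: supp_def)
  have "thetas j i \<le> (\<Sum>l<m. thetas l i)"
    by (rule member_le_sum) (use j pieces_nonneg i in \<open>auto simp: nonneg_vec_def\<close>)
  then show "i \<in> supp s0 theta" using pieces_sum i by (auto simp: supp_def)
qed

lemma time_scale_from_dominant:
  assumes "j \<in> dominant" "time_scale s0 r0 nu nu' alpha beta gamma (thetas j)"
  shows "time_scale s0 r0 nu nu' alpha beta gamma theta"
proof -
  obtain k where jk: "j < m" "k \<in> Gp (thetas j) \<union> Gm (thetas j)" "rate k = top_rate"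
    using assms(1) by (auto simp: dominant_def)
  have rates: "(SUP k\<in>Gp theta \<union> Gm theta. rate k) \<le> (SUP k\<in>Gp (thetas j) \<union> Gm (thetas j). rate k)"
    using SUP_active_le_top[OF Gamma_subset_active] SUP_upper[OF jk(2), of rate] jk(3) by simp
  have supps: "(SUP i\<in>supp s0 (thetas j). ereal (alpha i)) \<le> (SUP i\<in>supp s0 theta. ereal (alpha i))"
    using supp_piece_subset[OF jk(1)] by (rule SUP_subset_mono) simp
  have "ereal gamma \<le> (SUP i\<in>supp s0 (thetas j). ereal (alpha i))
      - (SUP k\<in>Gp (thetas j) \<union> Gm (thetas j). rate k)"
    using assms(2) by (simp add: time_scale_def)
  also have "\<dots> \<le> (SUP i\<in>supp s0 theta. ereal (alpha i)) - (SUP k\<in>Gp theta \<union> Gm theta. rate k)"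
    using rates supps by (intro ereal_minus_mono)
  finally show ?thesis by (simp add: time_scale_def)
qed

lemma balance_eq_compose:
  "\<forall>j<m. balance_eq s0 r0 nu nu' alpha beta (thetas j) \<Longrightarrow> balance_eq s0 r0 nu nu' alpha beta theta"
  by (rule balance_eq_from_dominant) (auto simp: dominant_def)

lemma time_scale_compose:
  assumes "\<forall>j<m. time_scale s0 r0 nu nu' alpha beta gamma (thetas j)"
  shows "time_scale s0 r0 nu nu' alpha beta gamma theta"
proof (cases "active = {}")
  case True
  then show ?thesis using Gamma_subset_active by (intro time_scale_no_reactions) auto
next
  case False
  then obtain j where "j \<in> dominant" using dominant_nonempty by blast
  then show ?thesis using assms time_scale_from_dominant by (auto simp: dominant_def)
qed

lemma cond32_compose:
  assumes all: "\<forall>j<m. cond32 s0 r0 nu nu' alpha beta gamma (thetas j)"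
  shows "cond32 s0 r0 nu nu' alpha beta gamma theta"
proof (cases "\<forall>j\<in>dominant. balance_eq s0 r0 nu nu' alpha beta (thetas j)")
  case True
  then show ?thesis using balance_eq_from_dominant by (simp add: cond32_def)
next
  case False
  then obtain j where "j \<in> dominant" "\<not> balance_eq s0 r0 nu nu' alpha beta (thetas j)" by blast
  moreover then have "time_scale s0 r0 nu nu' alpha beta gamma (thetas j)"
    using all by (auto simp: cond32_def dominant_def)
  ultimately show ?thesis using time_scale_from_dominant by (simp add: cond32_def)
qed

lemmas decomposition_compose = cond32_compose balance_eq_compose time_scale_compose

end

end

text \<open>Every nonnegative vector splits into its restrictions to the components.\<close>

lemma scc_decomposition_exists:
  assumes "nonneg_vec s0 theta"
  shows "\<exists>m thetas c. scc_decomposition s0 r0 nu nu' theta m thetas c"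
proof -
  define C where "C = scc s0 r0 nu nu' ` {..<s0}"
  define m where "m = card C"
  obtain f where f: "bij_betw f {..<m} C"
    using ex_bij_betw_nat_finite[of C] by (auto simp: C_def m_def atLeast0LessThan)
  define c where "c j = (SOME i. i < s0 \<and> scc s0 r0 nu nu' i = f j)" for j
  define thetas where "thetas j i = (if i \<in> f j then theta i else 0)" for j i
  have cj: "c j < s0 \<and> scc s0 r0 nu nu' (c j) = f j" if "j < m" for j
  proof -
    have "f j \<in> C" using f that by (auto simp: bij_betw_def)
    then have "\<exists>i. i < s0 \<and> scc s0 r0 nu nu' i = f j" by (auto simp: C_def)
    then show ?thesis unfolding c_def by (rule someI_ex)
  qed
  have injf: "inj_on f {..<m}" using f by (auto simp: bij_betw_def)
  have "theta i = (\<Sum>j<m. thetas j i)" if i: "i < s0" for i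
  proof -
    have "scc s0 r0 nu nu' i \<in> C" using i by (simp add: C_def)
    then obtain j0 where j0: "j0 < m" "f j0 = scc s0 r0 nu nu' i"
      using f unfolding bij_betw_def by (metis imageE lessThan_iff)
    have "(i \<in> f j) = (j = j0)" if "j < m" for j
    proof -
      have "(i \<in> f j) = (f j = f j0)"
        using cj[OF that] j0 scc_eq[of i s0 r0 nu nu'] scc_self[OF i, of r0 nu nu'] by metis
      also have "\<dots> = (j = j0)" using injf that j0 by (auto dest: inj_onD)
      finally show ?thesis .
    qed
    then have "(\<Sum>j<m. thetas j i) = (\<Sum>j<m. if j = j0 then theta i else 0)"
      by (intro sum.cong) (auto simp: thetas_def)
    then show ?thesis using j0 by simp
  qed
  then have "scc_decomposition s0 r0 nu nu' theta m thetas c"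
    unfolding scc_decomposition_def using assms cj injf
    by (auto simp: nonneg_vec_def thetas_def supp_def dest: inj_onD)
  then show ?thesis by blast
qed

lemma local_to_global:
  assumes compose: "\<And>theta m thetas c. scc_decomposition s0 r0 nu nu' theta m thetas c
                      \<Longrightarrow> \<forall>j<m. P (thetas j) \<Longrightarrow> P theta"
  shows "(\<forall>theta. nonneg_vec s0 theta \<and> (\<exists>i<s0. supp s0 theta \<subseteq> scc s0 r0 nu nu' i) \<longrightarrow> P theta)
     \<longrightarrow> (\<forall>theta. nonneg_vec s0 theta \<longrightarrow> P theta)"
proof (intro impI allI)
  fix theta :: "nat \<Rightarrow> real"
  assume local: "\<forall>theta. nonneg_vec s0 theta \<and> (\<exists>i<s0. supp s0 theta \<subseteq> scc s0 r0 nu nu' i) \<longrightarrow> P theta"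
    and "nonneg_vec s0 theta"
  then obtain m thetas c where d: "scc_decomposition s0 r0 nu nu' theta m thetas c"
    using scc_decomposition_exists by blast
  have "P (thetas j)" if "j < m" for j
  proof -
    have "nonneg_vec s0 (thetas j)" "c j < s0" "supp s0 (thetas j) \<subseteq> scc s0 r0 nu nu' (c j)"
      using that scc_decomposition.pieces_nonneg[OF d] scc_decomposition.pieces_in_scc[OF d] by auto
    then show ?thesis using local by blast
  qed
  then show "P theta" using compose[OF d] by blast
qed

lemma decomposition_hypotheses:
  "(\<forall>j<m. nonneg_vec s0 (thetas j)) \<and> (\<forall>i<s0. theta i = (\<Sum>j<m. thetas j i))
   \<and> (\<exists>c. (\<forall>j<m. c j < s0 \<and> supp s0 (thetas j) \<subseteq> scc s0 r0 nu nu' (c j))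
       \<and> (\<forall>j<m. \<forall>l<m. j \<noteq> l \<longrightarrow> scc s0 r0 nu nu' (c j) \<noteq> scc s0 r0 nu nu' (c l)))
   \<longleftrightarrow> (\<exists>c. scc_decomposition s0 r0 nu nu' theta m thetas c)"
  by (auto simp: scc_decomposition_def)

theorem lemma3p4:
  fixes s0 r0 :: nat and nu nu' :: "nat \<Rightarrow> nat \<Rightarrow> nat"
    and alpha beta :: "nat \<Rightarrow> real" and gamma :: real
  assumes "1 \<le> s0" and "1 \<le> r0"
    and "\<forall>i<s0. 0 \<le> alpha i"
  shows
   "(\<forall>(theta :: nat \<Rightarrow> real) (m :: nat) (thetas :: nat \<Rightarrow> nat \<Rightarrow> real).
       nonneg_vec s0 theta \<and> (\<forall>j<m. nonneg_vec s0 (thetas j))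
       \<and> (\<forall>i<s0. theta i = (\<Sum>j<m. thetas j i))
       \<and> (\<exists>c :: nat \<Rightarrow> nat.
            (\<forall>j<m. c j < s0 \<and> supp s0 (thetas j) \<subseteq> scc s0 r0 nu nu' (c j))
          \<and> (\<forall>j<m. \<forall>l<m. j \<noteq> l \<longrightarrow> scc s0 r0 nu nu' (c j) \<noteq> scc s0 r0 nu nu' (c l)))
     \<longrightarrow> ((\<forall>j<m. cond32 s0 r0 nu nu' alpha beta gamma (thetas j))
            \<longrightarrow> cond32 s0 r0 nu nu' alpha beta gamma theta)
       \<and> ((\<forall>j<m. balance_eq s0 r0 nu nu' alpha beta (thetas j))
            \<longrightarrow> balance_eq s0 r0 nu nu' alpha beta theta)
       \<and> ((\<forall>j<m. time_scale s0 r0 nu nu' alpha beta gamma (thetas j))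
            \<longrightarrow> time_scale s0 r0 nu nu' alpha beta gamma theta))
  \<and> ((\<forall>theta. nonneg_vec s0 theta \<and> (\<exists>i<s0. supp s0 theta \<subseteq> scc s0 r0 nu nu' i)
         \<longrightarrow> cond32 s0 r0 nu nu' alpha beta gamma theta)
      \<longrightarrow> (\<forall>theta. nonneg_vec s0 theta \<longrightarrow> cond32 s0 r0 nu nu' alpha beta gamma theta))
  \<and> ((\<forall>theta. nonneg_vec s0 theta \<and> (\<exists>i<s0. supp s0 theta \<subseteq> scc s0 r0 nu nu' i)
         \<longrightarrow> balance_eq s0 r0 nu nu' alpha beta theta)
      \<longrightarrow> (\<forall>theta. nonneg_vec s0 theta \<longrightarrow> balance_eq s0 r0 nu nu' alpha beta theta))
  \<and> ((\<forall>theta. nonneg_vec s0 theta \<and> (\<exists>i<s0. supp s0 theta \<subseteq> scc s0 r0 nu nu' i)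
         \<longrightarrow> time_scale s0 r0 nu nu' alpha beta gamma theta)
      \<longrightarrow> (\<forall>theta. nonneg_vec s0 theta \<longrightarrow> time_scale s0 r0 nu nu' alpha beta gamma theta))"
  unfolding decomposition_hypotheses
  unfolding decomposition_hypotheses
  by (intro conjI local_to_global allI impI; (elim conjE exE)?;
      erule scc_decomposition.decomposition_compose; assumption)

end
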